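(* Let $f$ be a piecewise smooth function with rational discontinuities at $0\le x_1<\dots<x_\nu<1$; put $x_0=0$, $A_i=\lim_{\delta\to0}[f(x_i-\delta)-f(x_i+\delta)]$, $c_i=\sum_{j=1}^iA_j$, and $g(x)=(\{x\}-\tfrac12)\sum_{i=1}^\nu A_i+\sum_{i=1}^\nu c_i(\mathbb{1}_{[x_{i-1},x_i)}(\{x\})-(x_i-x_{i-1}))$. Assume $\sum_{i=1}^\nu A_i\ne0$ or $\sum_{i=1}^\nu c_i(x_i-x_{i-1})\ne0$. Then there exist constants $c,c'>0$ and integers $\mu_j,\beta_j,\gamma_j,\delta_j$ ($j=1,2$), depending on $f$, and a constant $D>0$ such that for every irrational $\alpha=[0;a_1,a_2,\dots]$ the following holds for all sufficiently large $K$ with $a_K$ sufficiently large: (1) if $K\equiv\mu_1\pmod{\beta_1}$ and $q_{K-1}\equiv\gamma_1\pmod{\delta_1}$, then for every integer $0\le b\le ca_K$, $S_{bq_{K-1}}(g,\alpha)\ge bc'-D\sum_{i=1}^{K-1}a_i$; (2) if $K\equiv\mu_2\pmod{\beta_2}$ and $q_{K-1}\equiv\gamma_2\pmod{\delta_2}$, then for every integer $0\le b\le ca_K$, $S_{bq_{K-1}}(g,\alpha)\le -bc'+D\sum_{i=1}^{K-1}a_i$.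
   Context: $\{x\}$ is the fractional part; $q_k$ are the convergent denominators of $\alpha$ ($q_0=1,q_1=a_1,q_{k+1}=a_{k+1}q_k+q_{k-1}$). $S_N(g,\alpha):=\sum_{n=1}^N g(n\alpha)-N\int_0^1 g$. A $1$-periodic $f$ is a piecewise smooth function with rational discontinuities if there exist $\nu\ge1$ and rationals $0\le x_1<\dots<x_\nu<1$ such that $f$ is differentiable on $[0,1)\setminus\{x_1,\dots,x_\nu\}$, the restriction of $f'$ to $[0,1)$ extends to a function of bounded variation on $[0,1)$, and $\lim_{\delta\to0}[f(x_i-\delta)-f(x_i+\delta)]\ne0$ for some $i$. *)

theory Defs
  imports "HOL-Analysis.Analysis"
begin

definition bounded_variation_on :: "(real \<Rightarrow> real) \<Rightarrow> real set \<Rightarrow> bool" where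
  "bounded_variation_on h S \<longleftrightarrow>
     (\<exists>B. \<forall>ts::real list. sorted ts \<and> set ts \<subseteq> S \<longrightarrow>
        (\<Sum>k<length ts - 1. \<bar>h (ts ! Suc k) - h (ts ! k)\<bar>) \<le> B)"

definition pw_smooth_rat_disc :: "(real \<Rightarrow> real) \<Rightarrow> nat \<Rightarrow> (nat \<Rightarrow> real) \<Rightarrow> bool" where
  "pw_smooth_rat_disc f \<nu> x \<longleftrightarrow>
     (\<forall>y. f (y + 1) = f y) \<and>
     \<nu> \<ge> 1 \<and>
     (\<forall>i\<in>{1..\<nu>}. x i \<in> \<rat>) \<and>
     0 \<le> x 1 \<and> x \<nu> < 1 \<and>
     (\<forall>i\<in>{1..<\<nu>}. x i < x (Suc i)) \<and>
     (\<forall>y\<in>{0..<1} - x ` {1..\<nu>}. f differentiable (at y)) \<and>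
     (\<exists>h. bounded_variation_on h {0..<1} \<and>
          (\<forall>y\<in>{0..<1} - x ` {1..\<nu>}. h y = deriv f y)) \<and>
     (\<exists>i\<in>{1..\<nu>}. \<exists>L. L \<noteq> 0 \<and>
          ((\<lambda>\<delta>. f (x i - \<delta>) - f (x i + \<delta>)) \<longlongrightarrow> L) (at_right 0))"

definition jump :: "(real \<Rightarrow> real) \<Rightarrow> real \<Rightarrow> real" where
  "jump f p = Lim (at_right 0) (\<lambda>\<delta>. f (p - \<delta>) - f (p + \<delta>))"

definition gauss_map :: "real \<Rightarrow> real" where
  "gauss_map t = frac (1 / t)"

definition cf_a :: "real \<Rightarrow> nat \<Rightarrow> nat" where
  "cf_a \<alpha> k = nat \<lfloor>1 / ((gauss_map ^^ (k - 1)) \<alpha>)\<rfloor>"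

fun cf_q :: "real \<Rightarrow> nat \<Rightarrow> nat" where
  "cf_q \<alpha> 0 = 1"
| "cf_q \<alpha> (Suc 0) = cf_a \<alpha> 1"
| "cf_q \<alpha> (Suc (Suc k)) = cf_a \<alpha> (Suc (Suc k)) * cf_q \<alpha> (Suc k) + cf_q \<alpha> k"

definition S_sum :: "nat \<Rightarrow> (real \<Rightarrow> real) \<Rightarrow> real \<Rightarrow> real" where
  "S_sum N g \<alpha> = (\<Sum>n=1..N. g (real n * \<alpha>)) - real N * integral {0..1} g"

end

theory Submission
  imports Defs "HOL-Number_Theory.Cong"
begin

(* The function g is a sawtooth of total jump s plus a step function whose steps sit at
   rationals sigma_i/L. For the convergent p/q of index K - 1 one has alpha = (p + theta)/q with
   |theta| < 1/(a_K q), so for b <= C a_K the first b q points of the orbit stay within C/q of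
   the orbit of the rational rotation by p/q, whose residues (n p + c) mod q are equidistributed
   over b full periods. Hence S_{bq}(g) is b times an explicit constant up to an error b |s| C.
   If k L = q + rho with rho in {-1, 0, 1}, the step [sigma'/L, sigma/L) catches
   (q + rho)(sigma - sigma')/L residues per period, which produces a drift b rho M with
   M = sum c_i (x_i - x_(i-1)); the sawtooth contributes b s (d - 1/2), where d = 0 or 1
   according to the sign (-1)^(K-1) of theta. Prescribing q mod L and the parity of K therefore
   fixes the sign of the drift, which is nonzero by the non-degeneracy hypothesis. *)

section \<open>Continued fractions\<close>

definition cf_rem :: "real \<Rightarrow> nat \<Rightarrow> real" where
  "cf_rem \<alpha> k = (gauss_map ^^ k) \<alpha>"

fun cf_p :: "real \<Rightarrow> nat \<Rightarrow> nat" where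
  "cf_p \<alpha> 0 = 0"
| "cf_p \<alpha> (Suc 0) = 1"
| "cf_p \<alpha> (Suc (Suc k)) = cf_a \<alpha> (Suc (Suc k)) * cf_p \<alpha> (Suc k) + cf_p \<alpha> k"

definition cf_rem_prod :: "real \<Rightarrow> nat \<Rightarrow> real" where
  "cf_rem_prod \<alpha> k = (\<Prod>i\<le>k. cf_rem \<alpha> i)"

lemma frac_irrational:
  fixes t :: real
  assumes "t \<notin> \<rat>"
  shows "frac t \<notin> \<rat>"
  using assms Rats_add[OF Rats_of_int, of "frac t" "\<lfloor>t\<rfloor>"] by (auto simp: frac_def)

context
  fixes \<alpha> :: real
  assumes \<alpha>: "0 < \<alpha>" "\<alpha> < 1" "\<alpha> \<notin> \<rat>"
begin

lemma cf_rem_bounds: "0 < cf_rem \<alpha> k \<and> cf_rem \<alpha> k < 1 \<and> cf_rem \<alpha> k \<notin> \<rat>"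
proof (induction k)
  case 0
  then show ?case using \<alpha> by (simp add: cf_rem_def)
next
  case (Suc k)
  let ?t = "cf_rem \<alpha> k"
  have "1 / ?t \<notin> \<rat>"
    using Suc Rats_divide[OF Rats_1, of "1 / ?t"] by auto
  moreover have "cf_rem \<alpha> (Suc k) = frac (1 / ?t)"
    by (simp add: cf_rem_def gauss_map_def)
  ultimately show ?case
    using frac_irrational Ints_subset_Rats by (auto simp: frac_lt_1)
qed

lemma cf_a_Suc:
  "real (cf_a \<alpha> (Suc k)) = 1 / cf_rem \<alpha> k - cf_rem \<alpha> (Suc k)" "cf_a \<alpha> (Suc k) \<ge> 1"
proof -
  let ?t = "cf_rem \<alpha> k"
  have "1 < 1 / ?t" using cf_rem_bounds[of k] by simp
  then have fl: "\<lfloor>1 / ?t\<rfloor> \<ge> 1" by (simp add: le_floor_iff)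
  have a: "cf_a \<alpha> (Suc k) = nat \<lfloor>1 / ?t\<rfloor>" by (simp add: cf_a_def cf_rem_def)
  have "real (nat \<lfloor>1 / ?t\<rfloor>) = of_int \<lfloor>1 / ?t\<rfloor>"
    using fl by (intro of_nat_nat) linarith
  moreover have "cf_rem \<alpha> (Suc k) = frac (1 / ?t)" by (simp add: cf_rem_def gauss_map_def)
  ultimately show "real (cf_a \<alpha> (Suc k)) = 1 / ?t - cf_rem \<alpha> (Suc k)"
    by (simp add: a frac_def)
  show "cf_a \<alpha> (Suc k) \<ge> 1" using a fl by linarith
qed

lemma cf_rem_prod_pos: "cf_rem_prod \<alpha> k > 0"
  unfolding cf_rem_prod_def using cf_rem_bounds by (simp add: prod_pos)

lemma cf_rem_prod_0: "cf_rem_prod \<alpha> 0 = \<alpha>"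
  by (simp add: cf_rem_prod_def cf_rem_def)

lemma cf_rem_prod_1: "cf_rem_prod \<alpha> (Suc 0) = 1 - real (cf_a \<alpha> 1) * \<alpha>"
  using cf_a_Suc(1)[of 0] \<alpha> by (simp add: cf_rem_prod_def cf_rem_def field_simps)

lemma cf_rem_prod_Suc: "cf_rem_prod \<alpha> (Suc k) = cf_rem_prod \<alpha> k * cf_rem \<alpha> (Suc k)"
  by (simp add: cf_rem_prod_def)

lemma cf_rem_prod_Suc_Suc:
  "cf_rem_prod \<alpha> (Suc (Suc k)) = cf_rem_prod \<alpha> k - real (cf_a \<alpha> (Suc (Suc k))) * cf_rem_prod \<alpha> (Suc k)"
proof -
  let ?r1 = "cf_rem \<alpha> (Suc k)" and ?r2 = "cf_rem \<alpha> (Suc (Suc k))" and ?a = "real (cf_a \<alpha> (Suc (Suc k)))"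
  have r: "?r1 * ?r2 = 1 - ?a * ?r1"
    using cf_a_Suc(1)[of "Suc k"] cf_rem_bounds[of "Suc k"] by (simp add: field_simps)
  have "cf_rem_prod \<alpha> (Suc (Suc k)) = cf_rem_prod \<alpha> k * (?r1 * ?r2)"
    by (simp add: cf_rem_prod_Suc mult.assoc)
  also have "\<dots> = cf_rem_prod \<alpha> k - ?a * cf_rem_prod \<alpha> (Suc k)"
    by (simp add: r cf_rem_prod_Suc algebra_simps)
  finally show ?thesis .
qed

text \<open>The convergent error \<open>q\<^sub>k \<alpha> - p\<^sub>k\<close> and the products of remainders satisfy the same
  three-term recursion with the same initial values, up to the alternating sign.\<close>
lemma cf_error_eq: "real (cf_q \<alpha> k) * \<alpha> - real (cf_p \<alpha> k) = (-1) ^ k * cf_rem_prod \<alpha> k"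
proof (induction k rule: induct_nat_012)
  case (ge2 k)
  let ?a = "real (cf_a \<alpha> (Suc (Suc k)))"
  have "real (cf_q \<alpha> (Suc (Suc k))) * \<alpha> - real (cf_p \<alpha> (Suc (Suc k)))
      = ?a * (real (cf_q \<alpha> (Suc k)) * \<alpha> - real (cf_p \<alpha> (Suc k)))
        + (real (cf_q \<alpha> k) * \<alpha> - real (cf_p \<alpha> k))"
    by (simp add: algebra_simps)
  also have "\<dots> = ?a * ((-1) ^ Suc k * cf_rem_prod \<alpha> (Suc k)) + (-1) ^ k * cf_rem_prod \<alpha> k"
    by (simp only: ge2)
  also have "\<dots> = (-1) ^ Suc (Suc k) * cf_rem_prod \<alpha> (Suc (Suc k))"
    by (simp add: cf_rem_prod_Suc_Suc algebra_simps)
  finally show ?case .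
qed (simp_all add: cf_rem_prod_0 cf_rem_prod_1)

lemma cf_q_rem_prod_det:
  "real (cf_q \<alpha> (Suc k)) * cf_rem_prod \<alpha> k + real (cf_q \<alpha> k) * cf_rem_prod \<alpha> (Suc k) = 1"
proof (induction k)
  case 0
  then show ?case using \<alpha> by (simp add: cf_rem_prod_0 cf_rem_prod_1)
next
  case (Suc k)
  then show ?case by (simp add: cf_rem_prod_Suc_Suc algebra_simps)
qed

lemma cf_q_pos: "cf_q \<alpha> k \<ge> 1"
  by (induction k rule: induct_nat_012) (use cf_a_Suc(2) in \<open>auto simp: add_increasing\<close>)

lemma cf_a_q_rem_prod_less:
  assumes "K \<ge> 1"
  shows "real (cf_a \<alpha> K) * real (cf_q \<alpha> (K - 1)) * cf_rem_prod \<alpha> (K - 1) < 1"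
proof -
  obtain k where K: "K = Suc k" using assms by (cases K) auto
  have "cf_a \<alpha> K * cf_q \<alpha> k \<le> cf_q \<alpha> K"
    unfolding K by (cases k) auto
  then have "real (cf_a \<alpha> K) * real (cf_q \<alpha> k) * cf_rem_prod \<alpha> k \<le> real (cf_q \<alpha> K) * cf_rem_prod \<alpha> k"
    using cf_rem_prod_pos[of k] by (intro mult_right_mono) (simp_all flip: of_nat_mult)
  also have "\<dots> < 1"
  proof -
    have "real (cf_q \<alpha> k) * cf_rem_prod \<alpha> (Suc k) > 0"
      using cf_q_pos[of k] cf_rem_prod_pos[of "Suc k"] by simp
    then show ?thesis using cf_q_rem_prod_det[of k] unfolding K by linarith
  qed
  finally show ?thesis by (simp add: K)
qed

lemma cf_convergent_error:
  assumes K: "K \<ge> 1"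
  defines "\<theta> \<equiv> real (cf_q \<alpha> (K - 1)) * \<alpha> - real (cf_p \<alpha> (K - 1))"
  shows "0 < (-1) ^ (K - 1) * \<theta>" and "real (cf_a \<alpha> K) * real (cf_q \<alpha> (K - 1)) * \<bar>\<theta>\<bar> < 1"
proof -
  have \<theta>: "\<theta> = (-1) ^ (K - 1) * cf_rem_prod \<alpha> (K - 1)"
    unfolding \<theta>_def by (rule cf_error_eq)
  then show "0 < (-1) ^ (K - 1) * \<theta>"
    using cf_rem_prod_pos[of "K - 1"] by (cases "even (K - 1)") simp_all
  have "\<bar>\<theta>\<bar> = cf_rem_prod \<alpha> (K - 1)"
    using \<theta> cf_rem_prod_pos[of "K - 1"] by (simp add: abs_mult)
  then show "real (cf_a \<alpha> K) * real (cf_q \<alpha> (K - 1)) * \<bar>\<theta>\<bar> < 1"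
    using cf_a_q_rem_prod_less[OF K] by simp
qed

lemma cf_convergent_error_multiple:
  assumes K: "K \<ge> 1" and b: "real b \<le> C * real (cf_a \<alpha> K)" and CL: "C * real L \<le> 1"
  defines "\<theta> \<equiv> real (cf_q \<alpha> (K - 1)) * \<alpha> - real (cf_p \<alpha> (K - 1))"
  shows "real b * real (cf_q \<alpha> (K - 1)) * \<bar>\<theta>\<bar> \<le> C"
    and "real L * real (b * cf_q \<alpha> (K - 1)) * \<bar>\<theta>\<bar> < 1"
proof -
  let ?q = "real (cf_q \<alpha> (K - 1))"
  have aq: "real (cf_a \<alpha> K) * ?q * \<bar>\<theta>\<bar> < 1"
    unfolding \<theta>_def by (rule cf_convergent_error(2)[OF K])
  have "0 \<le> C * real (cf_a \<alpha> K)"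
    using b by linarith
  then have "0 \<le> C"
    using cf_a_Suc(2)[of "K - 1"] K by (simp add: zero_le_mult_iff)
  have bq: "real b * ?q * \<bar>\<theta>\<bar> \<le> C * (real (cf_a \<alpha> K) * ?q * \<bar>\<theta>\<bar>)"
    using mult_right_mono[OF b, of "?q * \<bar>\<theta>\<bar>"] by (simp add: ac_simps)
  also have "\<dots> \<le> C"
    using aq \<open>0 \<le> C\<close> by (intro mult_left_le) auto
  finally show "real b * ?q * \<bar>\<theta>\<bar> \<le> C" .
  have "real L * real (b * cf_q \<alpha> (K - 1)) * \<bar>\<theta>\<bar> \<le> (C * real L) * (real (cf_a \<alpha> K) * ?q * \<bar>\<theta>\<bar>)"
    using mult_left_mono[OF bq, of "real L"] by (simp add: ac_simps)
  also have "\<dots> \<le> real (cf_a \<alpha> K) * ?q * \<bar>\<theta>\<bar>"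
    using CL \<open>0 \<le> C\<close> by (intro mult_left_le_one_le) auto
  finally show "real L * real (b * cf_q \<alpha> (K - 1)) * \<bar>\<theta>\<bar> < 1"
    using aq by linarith
qed

end

lemma cf_p_q_det:
  "int (cf_p \<alpha> (Suc k)) * int (cf_q \<alpha> k) - int (cf_p \<alpha> k) * int (cf_q \<alpha> (Suc k)) = (-1) ^ k"
  by (induction k) (simp_all add: algebra_simps)

lemma coprime_cf_p_q: "coprime (cf_p \<alpha> k) (cf_q \<alpha> k)"
proof -
  have "coprime (int (cf_p \<alpha> k)) (int (cf_q \<alpha> k))"
    using cf_p_q_det[of \<alpha> k]
    by (metis coprime_def dvd_diff dvd_mult minus_one_mult_self mult_commute_abs)
  then show ?thesis by simp
qed

section \<open>Orbits of rational rotations\<close>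

lemma mult_of_int_le_iff_nonpos:
  fixes L R :: real and X :: int
  assumes "0 < R" "R < L"
  shows "L * of_int X \<le> R \<longleftrightarrow> X \<le> 0"
proof (cases "X \<le> 0")
  case True
  then have "L * of_int X \<le> 0" using assms by (intro mult_nonneg_nonpos) auto
  then show ?thesis using True assms by simp
next
  case False
  then have "L \<le> L * of_int X" using assms by (simp add: mult_le_cancel_left1)
  then have "\<not> L * of_int X \<le> R" using assms by linarith
  then show ?thesis using False by simp
qed

lemma frac_mult_near_rational:
  fixes p q n :: nat and \<theta> :: real
  assumes q: "q \<ge> 1" and n: "n \<ge> 1" and \<theta>: "\<theta> \<noteq> 0" "real n * \<bar>\<theta>\<bar> < 1"
  defines "d \<equiv> of_bool (\<theta> < 0) :: nat"
  shows "frac (real n * ((real p + \<theta>) / real q))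
    = (real ((n * p + d * (q - 1)) mod q) + real d + real n * \<theta>) / real q"
proof -
  define v where "v = (n * p + d * (q - 1)) mod q"
  define m where "m = (n * p + d * (q - 1)) div q"
  have "n * p + d * (q - 1) = q * m + v"
    by (simp add: m_def v_def)
  then have "real (n * p) + real d * (real q - 1) = real q * real m + real v"
    using q by (metis of_nat_1 of_nat_add of_nat_diff of_nat_mult)
  then have "real n * ((real p + \<theta>) / real q) = of_int (int m - int d) + (real v + real d + real n * \<theta>) / real q"
    using q by (simp add: field_simps)
  moreover have "0 < real d + real n * \<theta>" "real d + real n * \<theta> < 1"
    using n \<theta> by (auto simp: d_def abs_if mult_pos_neg)
  moreover have "real v + 1 \<le> real q"
  proof -
    have "v + 1 \<le> q" using q by (simp add: v_def Suc_le_eq)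
    then show ?thesis by (metis of_nat_1 of_nat_add of_nat_le_iff)
  qed
  ultimately show ?thesis
    unfolding v_def[symmetric] using q by (simp add: frac_unique_iff)
qed

text \<open>With \<open>k L = q + \<rho>\<close>, the grid point \<open>\<sigma>/L\<close> lies between the same consecutive
  residues \<open>v/q\<close> as \<open>k\<sigma>/q\<close>; the sign condition on \<open>\<rho>\<close> keeps the perturbation on the right side.\<close>
lemma grid_le_frac_mult_iff:
  fixes p q n k L \<sigma> :: nat and \<theta> :: real and \<rho> :: int
  assumes q: "q \<ge> 1" and n: "n \<ge> 1" and \<theta>: "\<theta> \<noteq> 0" "real L * real n * \<bar>\<theta>\<bar> < 1"
    and kL: "int (k * L) = int q + \<rho>" and \<rho>: "\<bar>\<rho>\<bar> \<le> 1" "0 \<le> of_int \<rho> * \<theta>" and \<sigma>: "\<sigma> < L"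
  defines "d \<equiv> of_bool (\<theta> < 0) :: nat"
  shows "real \<sigma> / real L \<le> frac (real n * ((real p + \<theta>) / real q))
    \<longleftrightarrow> k * \<sigma> \<le> (n * p + d * (q - 1)) mod q"
proof -
  define v where "v = (n * p + d * (q - 1)) mod q"
  define A where "A = real v + real d + real n * \<theta>"
  define t where "t = real L * real n * \<theta>"
  define R where "R = real \<sigma> * of_int \<rho> + real L * real d + t"
  have L: "L \<ge> 1" using \<sigma> by simp
  have \<sigma>': "real \<sigma> \<le> real L - 1" using \<sigma> by linarith
  have "1 * (real n * \<bar>\<theta>\<bar>) \<le> real L * (real n * \<bar>\<theta>\<bar>)"
    using L by (intro mult_right_mono) auto
  then have F: "frac (real n * ((real p + \<theta>) / real q)) = A / real q"
    using frac_mult_near_rational[OF q n \<theta>(1)] \<theta>(2) unfolding v_def d_def A_def by (simp add: mult.assoc)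
  have t: "\<bar>t\<bar> < 1" "\<theta> > 0 \<Longrightarrow> t > 0" "\<theta> < 0 \<Longrightarrow> t < 0"
    using \<theta>(2) n L by (simp_all add: t_def abs_mult mult_pos_neg)
  have "0 < R \<and> R < real L"
  proof (cases "\<theta> > 0")
    case True
    then have "\<rho> = 0 \<or> \<rho> = 1" using \<rho> by (auto simp: zero_le_mult_iff)
    then show ?thesis
      using True t \<sigma>' by (auto simp: R_def d_def)
  next
    case False
    then have "\<theta> < 0" using \<theta>(1) by simp
    then have "\<rho> = 0 \<or> \<rho> = -1" using \<rho> by (auto simp: zero_le_mult_iff)
    then show ?thesis
      using \<open>\<theta> < 0\<close> t \<sigma>' by (auto simp: R_def d_def)
  qed
  then have R: "0 < R" "R < real L" by simp_all
  have \<sigma>q: "real \<sigma> * real q = real L * (real k * real \<sigma>) - real \<sigma> * of_int \<rho>"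
  proof -
    have q_eq: "real q = real k * real L - of_int \<rho>"
      using arg_cong[OF kL, of real_of_int] by simp
    show ?thesis unfolding q_eq by (simp add: algebra_simps)
  qed
  have "R = real L * A - real L * real v + real \<sigma> * of_int \<rho>"
    by (simp add: R_def A_def t_def algebra_simps)
  then have "real \<sigma> / real L \<le> A / real q \<longleftrightarrow> real L * (real k * real \<sigma>) - real L * real v \<le> R"
    using q L \<sigma>q by (simp add: field_simps) (rule iffI; linarith)
  also have "\<dots> \<longleftrightarrow> real L * of_int (int (k * \<sigma>) - int v) \<le> R"
    by (simp add: algebra_simps)
  also have "\<dots> \<longleftrightarrow> k * \<sigma> \<le> v"
    using mult_of_int_le_iff_nonpos[OF R, of "int (k * \<sigma>) - int v"] by (simp flip: of_nat_mult)
  finally show ?thesis unfolding F v_def .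
qed

lemma sum_mod_periodic:
  fixes h :: "nat \<Rightarrow> 'a::comm_semiring_1"
  shows "(\<Sum>n<b * q. h (n mod q)) = of_nat b * (\<Sum>r<q. h r)"
proof (induction b)
  case (Suc b)
  have "(\<Sum>n<Suc b * q. h (n mod q)) = (\<Sum>n<b * q. h (n mod q)) + (\<Sum>n\<in>{b * q..<b * q + q}. h (n mod q))"
    by (simp add: lessThan_atLeast0 sum.atLeastLessThan_concat add.commute)
  also have "(\<Sum>n\<in>{b * q..<b * q + q}. h (n mod q)) = (\<Sum>r<q. h r)"
    using sum.shift_bounds_nat_ivl[of "\<lambda>n. h (n mod q)" 0 "b * q" q]
    by (simp add: add.commute lessThan_atLeast0)
  finally show ?case using Suc by (simp add: algebra_simps)
qed simp

text \<open>Multiplication by \<open>p\<close> permutes the residues modulo \<open>q\<close>.\<close>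
lemma sum_affine_mod_multiple:
  fixes H :: "nat \<Rightarrow> 'a::comm_semiring_1"
  assumes cop: "coprime p q"
  shows "(\<Sum>n=1..b * q. H ((n * p + c) mod q)) = of_nat b * (\<Sum>v<q. H v)"
proof (cases "q = 0")
  case False
  define f where "f r = (Suc r * p + c) mod q" for r
  have per: "(Suc n * p + c) mod q = f (n mod q)" for n
    unfolding f_def by (metis mod_add_left_eq mod_mult_left_eq mod_Suc_eq)
  have inj: "inj_on f {..<q}"
  proof
    fix r s assume "r \<in> {..<q}" "s \<in> {..<q}" "f r = f s"
    then have "[Suc r * p + c = Suc s * p + c] (mod q)" by (simp add: f_def cong_def)
    then have "[Suc r * p = Suc s * p] (mod q)" by (simp add: cong_add_rcancel_nat)
    then have "[Suc r = Suc s] (mod q)" using cong_mult_rcancel_nat[OF cop] by blast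
    then have "[r = s] (mod q)" by (metis Suc_eq_plus1 cong_add_rcancel_nat)
    then show "r = s" using \<open>r \<in> {..<q}\<close> \<open>s \<in> {..<q}\<close> by (simp add: cong_def)
  qed
  have "f ` {..<q} = {..<q}"
    by (rule endo_inj_surj) (use inj False in \<open>auto simp: f_def\<close>)
  then have perm: "(\<Sum>r<q. H (f r)) = (\<Sum>v<q. H v)"
    using sum.reindex[OF inj, of H] by simp
  have "(\<Sum>n=1..b * q. H ((n * p + c) mod q)) = (\<Sum>n<b * q. H ((Suc n * p + c) mod q))"
    by (simp add: sum.atLeast1_atMost_eq)
  also have "\<dots> = (\<Sum>n<b * q. H (f (n mod q)))"
    by (simp only: per)
  also have "\<dots> = of_nat b * (\<Sum>v<q. H v)"
    using sum_mod_periodic[of "\<lambda>r. H (f r)"] perm by simp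
  finally show ?thesis .
qed simp

lemma sum_of_nat_lessThan: "(\<Sum>v<q. real v) = real q * (real q - 1) / 2"
  by (induction q) (auto simp: field_simps)

lemma sum_if_atLeastLessThan:
  assumes "a \<le> b" "b \<le> q"
  shows "(\<Sum>v<q. if a \<le> v \<and> v < b then 1 else 0 :: real) = real b - real a"
proof -
  have "{v. v < q \<and> a \<le> v \<and> v < b} = {a..<b}" using assms by auto
  then show ?thesis using assms by (simp add: sum.If_cases Int_def)
qed

lemma sum_frac_mult_near_rational:
  fixes p q b :: nat and \<theta> :: real
  assumes q: "q \<ge> 1" and cop: "coprime p q" and \<theta>: "\<theta> \<noteq> 0" "real (b * q) * \<bar>\<theta>\<bar> < 1"
  defines "d \<equiv> of_bool (\<theta> < 0) :: nat"
  shows "(\<Sum>n=1..b * q. frac (real n * ((real p + \<theta>) / real q)) - 1/2)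
    = real b * (real d - 1/2) + (\<Sum>n=1..b * q. real n * \<theta>) / real q"
proof -
  define H where "H v = (real v + real d) / real q - 1/2" for v
  have "frac (real n * ((real p + \<theta>) / real q)) - 1/2 = H ((n * p + d * (q - 1)) mod q) + real n * \<theta> / real q"
    if "n \<in> {1..b * q}" for n
  proof -
    have "real n * \<bar>\<theta>\<bar> \<le> real (b * q) * \<bar>\<theta>\<bar>"
      using that by (intro mult_right_mono) (auto simp flip: of_nat_mult)
    then show ?thesis
      using frac_mult_near_rational[OF q _ \<theta>(1), of n p] that \<theta>(2)
      by (simp add: H_def d_def add_divide_distrib)
  qed
  then have "(\<Sum>n=1..b * q. frac (real n * ((real p + \<theta>) / real q)) - 1/2)
      = (\<Sum>n=1..b * q. H ((n * p + d * (q - 1)) mod q)) + (\<Sum>n=1..b * q. real n * \<theta>) / real q"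
    by (simp add: sum.distrib sum_divide_distrib)
  also have "(\<Sum>n=1..b * q. H ((n * p + d * (q - 1)) mod q)) = real b * (\<Sum>v<q. H v)"
    using sum_affine_mod_multiple[OF cop] by simp
  also have "(\<Sum>v<q. H v) = real d - 1/2"
    using q by (simp add: H_def sum_subtractf sum.distrib sum_of_nat_lessThan flip: sum_divide_distrib)
      (simp add: field_simps)
  finally show ?thesis .
qed

lemma sum_indicator_grid_frac_mult:
  fixes p q b k L \<sigma>' \<sigma> :: nat and \<theta> :: real and \<rho> :: int
  assumes q: "q \<ge> 1" and cop: "coprime p q" and \<theta>: "\<theta> \<noteq> 0" "real L * real (b * q) * \<bar>\<theta>\<bar> < 1"
    and kL: "int (k * L) = int q + \<rho>" and \<rho>: "\<bar>\<rho>\<bar> \<le> 1" "0 \<le> of_int \<rho> * \<theta>"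
    and \<sigma>: "\<sigma>' \<le> \<sigma>" "\<sigma> < L"
  shows "(\<Sum>n=1..b * q. indicator {real \<sigma>' / real L..<real \<sigma> / real L}
      (frac (real n * ((real p + \<theta>) / real q))) :: real)
    = real b * (real q + of_int \<rho>) * ((real \<sigma> - real \<sigma>') / real L)"
proof -
  define v where "v n = (n * p + of_bool (\<theta> < 0) * (q - 1)) mod q" for n
  define I where "I w = (if k * \<sigma>' \<le> w \<and> w < k * \<sigma> then 1 else 0 :: real)" for w
  have "indicator {real \<sigma>' / real L..<real \<sigma> / real L} (frac (real n * ((real p + \<theta>) / real q))) = I (v n)"
    if "n \<in> {1..b * q}" for n
  proof -
    have "real L * real n * \<bar>\<theta>\<bar> \<le> real L * real (b * q) * \<bar>\<theta>\<bar>"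
      using that by (intro mult_right_mono mult_left_mono) (auto simp flip: of_nat_mult)
    then have small: "real L * real n * \<bar>\<theta>\<bar> < 1" using \<theta>(2) by linarith
    have n: "n \<ge> 1" using that by simp
    have le_iff: "real \<tau> / real L \<le> frac (real n * ((real p + \<theta>) / real q)) \<longleftrightarrow> k * \<tau> \<le> v n"
      if "\<tau> < L" for \<tau>
      unfolding v_def by (rule grid_le_frac_mult_iff[OF q n \<theta>(1) small kL \<rho> that])
    have "frac (real n * ((real p + \<theta>) / real q)) < real \<sigma> / real L \<longleftrightarrow> v n < k * \<sigma>"
      using le_iff[OF \<sigma>(2)] by (metis not_le)
    with le_iff[of \<sigma>'] \<sigma> show ?thesis
      by (simp add: I_def indicator_def)
  qed
  then have "(\<Sum>n=1..b * q. indicator {real \<sigma>' / real L..<real \<sigma> / real L}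
      (frac (real n * ((real p + \<theta>) / real q))) :: real) = (\<Sum>n=1..b * q. I (v n))"
    by (rule sum.cong[OF refl])
  also have "\<dots> = real b * (\<Sum>w<q. I w)"
    unfolding v_def by (rule sum_affine_mod_multiple[OF cop])
  also have "(\<Sum>w<q. I w) = real k * (real \<sigma> - real \<sigma>')"
  proof -
    have "k * \<sigma> + k \<le> k * L"
      using mult_le_mono2[of "\<sigma> + 1" L k] \<sigma> by simp
    then have "int (k * \<sigma>) + int k \<le> int q + \<rho>"
      using kL by (metis of_nat_add of_nat_le_iff)
    moreover have "k \<noteq> 0 \<Longrightarrow> int k \<ge> 1" by simp
    ultimately have "int (k * \<sigma>) \<le> int q"
      using \<rho>(1) by (cases "k = 0") (auto simp: abs_le_iff)
    then have "k * \<sigma> \<le> q" by (simp only: of_nat_le_iff)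
    then show ?thesis
      unfolding I_def using sum_if_atLeastLessThan[of "k * \<sigma>'" "k * \<sigma>" q] \<sigma>
      by (simp add: algebra_simps)
  qed
  also have "real b * (real k * (real \<sigma> - real \<sigma>'))
      = real b * (real q + of_int \<rho>) * ((real \<sigma> - real \<sigma>') / real L)"
  proof -
    have k_eq: "real k = (real q + of_int \<rho>) / real L"
      using arg_cong[OF kL, of real_of_int] \<sigma> by (simp add: field_simps)
    have "real L \<noteq> 0" using \<sigma> by simp
    then show ?thesis unfolding k_eq by (simp add: field_simps)
  qed
  finally show ?thesis .
qed

section \<open>Birkhoff sums of the step function\<close>

lemma has_integral_indicator_frac:
  fixes s t :: real
  assumes "0 \<le> s" "s \<le> t" "t \<le> 1"
  shows "((\<lambda>y. indicator {s..<t} (frac y) :: real) has_integral (t - s)) {0..1}"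
proof -
  have restrict: "((\<lambda>y. if y \<in> {s..t} then 1 else 0 :: real) has_integral (t - s)) {0..1}"
    using has_integral_const_real[of "1::real" s t] assms by (subst has_integral_restrict) auto
  have spike: "indicator {s..<t} (frac y) = (if y \<in> {s..t} then 1 else 0 :: real)"
    if "y \<in> {0..1} - {1, t}" for y
    using that by (auto simp: frac_eq indicator_def)
  show ?thesis
    by (rule has_integral_spike_finite[where S="{1, t}", OF _ spike restrict]) simp
qed

lemma has_integral_frac_minus_half: "((\<lambda>y. frac y - 1/2) has_integral 0) {0..1::real}"
proof -
  have line: "((\<lambda>y. y - 1/2) has_integral 0) {0..1::real}"
    using has_integral_diff[OF ident_has_integral[of 0 1] has_integral_const_real[of "1/2" 0 1]]
    by simp
  have spike: "frac y - 1/2 = y - 1/2" if "y \<in> {0..1} - {1::real}" for y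
    using that by (simp add: frac_eq)
  show ?thesis
    by (rule has_integral_spike_finite[where S="{1}", OF _ spike line]) simp
qed

text \<open>The function \<open>g\<close> of the theorem, with \<open>s = \<Sum>A\<^sub>i\<close>.\<close>
definition sawtooth_step :: "real \<Rightarrow> nat \<Rightarrow> (nat \<Rightarrow> real) \<Rightarrow> (nat \<Rightarrow> real) \<Rightarrow> real \<Rightarrow> real" where
  "sawtooth_step s \<nu> c x y = (frac y - 1/2) * s
     + (\<Sum>i=1..\<nu>. c i * (indicator {x (i - 1)..<x i} (frac y) - (x i - x (i - 1))))"

lemma has_integral_sawtooth_step:
  assumes "\<And>i. i \<in> {1..\<nu>} \<Longrightarrow> 0 \<le> x (i - 1) \<and> x (i - 1) \<le> x i \<and> x i \<le> 1"
  shows "(sawtooth_step s \<nu> c x has_integral 0) {0..1}"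
proof -
  have summand: "((\<lambda>y. c i * (indicator {x (i - 1)..<x i} (frac y) - (x i - x (i - 1)))) has_integral 0) {0..1}"
    if "i \<in> {1..\<nu>}" for i
  proof -
    have "((\<lambda>y. indicator {x (i - 1)..<x i} (frac y) :: real) has_integral (x i - x (i - 1))) {0..1}"
      using has_integral_indicator_frac assms[OF that] by blast
    from has_integral_diff[OF this has_integral_const_real[of "x i - x (i - 1)" 0 1]]
    have "((\<lambda>y. indicator {x (i - 1)..<x i} (frac y) - (x i - x (i - 1))) has_integral 0) {0..1}"
      by simp
    from has_integral_mult_right[OF this, of "c i"] show ?thesis by simp
  qed
  have "((\<lambda>y. \<Sum>i=1..\<nu>. c i * (indicator {x (i - 1)..<x i} (frac y) - (x i - x (i - 1))))
      has_integral (\<Sum>i=1..\<nu>. 0)) {0..1}"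
    by (rule has_integral_sum) (simp, erule summand)
  then have "((\<lambda>y. \<Sum>i=1..\<nu>. c i * (indicator {x (i - 1)..<x i} (frac y) - (x i - x (i - 1))))
      has_integral 0) {0..1}"
    by simp
  from has_integral_add[OF has_integral_mult_left[OF has_integral_frac_minus_half, of s] this]
  show ?thesis
    unfolding sawtooth_step_def[abs_def] by simp
qed

lemma S_sum_sawtooth_step_near_rational:
  fixes p q b k L \<nu> :: nat and \<theta> s :: real and \<rho> :: int and \<sigma> :: "nat \<Rightarrow> nat"
    and c x :: "nat \<Rightarrow> real"
  assumes q: "q \<ge> 1" and cop: "coprime p q" and \<theta>: "\<theta> \<noteq> 0" "real L * real (b * q) * \<bar>\<theta>\<bar> < 1"
    and kL: "int (k * L) = int q + \<rho>" and \<rho>: "\<bar>\<rho>\<bar> \<le> 1" "0 \<le> of_int \<rho> * \<theta>"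
    and grid: "\<And>i. i \<le> \<nu> \<Longrightarrow> \<sigma> i < L \<and> x i = real (\<sigma> i) / real L"
    and mono: "\<And>i. i \<in> {1..\<nu>} \<Longrightarrow> \<sigma> (i - 1) \<le> \<sigma> i"
  defines "d \<equiv> of_bool (\<theta> < 0) :: nat"
  shows "S_sum (b * q) (sawtooth_step s \<nu> c x) ((real p + \<theta>) / real q)
    = real b * (s * (real d - 1/2) + of_int \<rho> * (\<Sum>i=1..\<nu>. c i * (x i - x (i - 1))))
      + s * (\<Sum>n=1..b * q. real n * \<theta>) / real q"
proof -
  define \<alpha> where "\<alpha> = (real p + \<theta>) / real q"
  define ind where "ind i n = (indicator {x (i - 1)..<x i} (frac (real n * \<alpha>)) :: real)" for i n
  define len where "len i = x i - x (i - 1)" for i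
  have L: "L \<ge> 1" using grid[of 0] by simp
  have "0 \<le> x (i - 1) \<and> x (i - 1) \<le> x i \<and> x i \<le> 1" if "i \<in> {1..\<nu>}" for i
    using grid[of i] grid[of "i - 1"] mono[OF that] that by (auto simp: divide_right_mono)
  then have "integral {0..1} (sawtooth_step s \<nu> c x) = 0"
    by (intro integral_unique has_integral_sawtooth_step)
  then have "S_sum (b * q) (sawtooth_step s \<nu> c x) \<alpha>
      = (\<Sum>n=1..b * q. (frac (real n * \<alpha>) - 1/2) * s + (\<Sum>i=1..\<nu>. c i * (ind i n - len i)))"
    by (simp add: S_sum_def sawtooth_step_def ind_def len_def)
  also have "\<dots> = (\<Sum>n=1..b * q. frac (real n * \<alpha>) - 1/2) * s
      + (\<Sum>n=1..b * q. \<Sum>i=1..\<nu>. c i * (ind i n - len i))"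
    by (simp add: sum.distrib sum_distrib_right)
  also have "(\<Sum>n=1..b * q. \<Sum>i=1..\<nu>. c i * (ind i n - len i))
      = (\<Sum>i=1..\<nu>. c i * ((\<Sum>n=1..b * q. ind i n) - real (b * q) * len i))"
    by (subst sum.swap) (simp add: sum_subtractf flip: sum_distrib_left)
  also have "\<dots> = (\<Sum>i=1..\<nu>. real b * of_int \<rho> * (c i * len i))"
  proof (rule sum.cong)
    fix i assume i: "i \<in> {1..\<nu>}"
    have xi: "x i = real (\<sigma> i) / real L" "x (i - 1) = real (\<sigma> (i - 1)) / real L" and "\<sigma> i < L"
      using grid[of i] grid[of "i - 1"] i by auto
    then have "(\<Sum>n=1..b * q. ind i n) = real b * (real q + of_int \<rho>) * len i"
      using sum_indicator_grid_frac_mult[OF q cop \<theta> kL \<rho> mono[OF i]]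
      unfolding ind_def len_def \<alpha>_def xi by (simp add: diff_divide_distrib)
    then show "c i * ((\<Sum>n=1..b * q. ind i n) - real (b * q) * len i) = real b * of_int \<rho> * (c i * len i)"
      by (simp add: algebra_simps)
  qed simp
  also have "(\<Sum>n=1..b * q. frac (real n * \<alpha>) - 1/2) = real b * (real d - 1/2) + (\<Sum>n=1..b * q. real n * \<theta>) / real q"
  proof -
    have "1 * (real (b * q) * \<bar>\<theta>\<bar>) \<le> real L * (real (b * q) * \<bar>\<theta>\<bar>)"
      using L by (intro mult_right_mono) auto
    then show ?thesis
      using sum_frac_mult_near_rational[OF q cop \<theta>(1), of b] \<theta>(2) by (simp add: \<alpha>_def d_def mult.assoc)
  qed
  finally show ?thesis
    by (simp add: \<alpha>_def len_def sum_distrib_left algebra_simps)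
qed

lemma nonneg_int_dvd_imp_nat_mult:
  fixes L :: nat and z :: int
  assumes "int L dvd z" "0 \<le> z"
  obtains k where "int (k * L) = z"
proof -
  obtain m where m: "z = int L * m" using assms(1) by (elim dvdE)
  show ?thesis
  proof (cases "L = 0")
    case True
    then show ?thesis using m that[of 0] by simp
  next
    case False
    then have "0 \<le> m" using m assms(2) by (simp add: zero_le_mult_iff)
    then show ?thesis using m that[of "nat m"] by (simp add: mult.commute)
  qed
qed

lemma abs_sum_of_nat_mult_le:
  fixes \<theta> :: real
  shows "\<bar>\<Sum>n=1..N. real n * \<theta>\<bar> \<le> real N * real N * \<bar>\<theta>\<bar>"
proof -
  have "\<bar>\<Sum>n=1..N. real n * \<theta>\<bar> \<le> (\<Sum>n=1..N. real N * \<bar>\<theta>\<bar>)"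
  proof (rule order_trans[OF sum_abs sum_mono])
    fix n assume "n \<in> {1..N}"
    then show "\<bar>real n * \<theta>\<bar> \<le> real N * \<bar>\<theta>\<bar>"
      by (simp add: abs_mult mult_right_mono)
  qed
  then show ?thesis by simp
qed

text \<open>With the convergent \<open>p/q\<close> of index \<open>K - 1\<close>, \<open>\<alpha> = (p + \<theta>)/q\<close> and
  \<open>\<bar>\<theta>\<bar> < 1/(a\<^sub>K q)\<close>, so for \<open>b \<le> C a\<^sub>K\<close> the first \<open>b q\<close> points of the orbit stay
  within \<open>C/q\<close> of the rotation by \<open>p/q\<close>, and the rational case applies.\<close>
lemma S_sum_sawtooth_step_convergent:
  fixes \<alpha> C s :: real and K L b \<nu> :: nat and \<rho>\<^sub>0 :: int and \<sigma> :: "nat \<Rightarrow> nat"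
    and c x :: "nat \<Rightarrow> real"
  assumes \<alpha>: "0 < \<alpha>" "\<alpha> < 1" "\<alpha> \<notin> \<rat>" and K: "K \<ge> 1"
    and grid: "\<And>i. i \<le> \<nu> \<Longrightarrow> \<sigma> i < L \<and> x i = real (\<sigma> i) / real L"
    and mono: "\<And>i. i \<in> {1..\<nu>} \<Longrightarrow> \<sigma> (i - 1) \<le> \<sigma> i"
    and qL: "int (cf_q \<alpha> (K - 1)) mod int L = (- ((-1) ^ (K - 1) * \<rho>\<^sub>0)) mod int L"
    and \<rho>\<^sub>0: "\<rho>\<^sub>0 \<in> {0, 1}" and CL: "C * real L \<le> 1" and b: "real b \<le> C * real (cf_a \<alpha> K)"
  shows "\<bar>S_sum (b * cf_q \<alpha> (K - 1)) (sawtooth_step s \<nu> c x) \<alpha>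
      - (-1) ^ (K - 1) * real b * (of_int \<rho>\<^sub>0 * (\<Sum>i=1..\<nu>. c i * (x i - x (i - 1))) - s / 2)\<bar>
    \<le> real b * \<bar>s\<bar> * C"
proof -
  define q where "q = cf_q \<alpha> (K - 1)"
  define p where "p = cf_p \<alpha> (K - 1)"
  define \<theta> where "\<theta> = real q * \<alpha> - real p"
  define \<rho> :: int where "\<rho> = (-1) ^ (K - 1) * \<rho>\<^sub>0"
  define M where "M = (\<Sum>i=1..\<nu>. c i * (x i - x (i - 1)))"
  have q: "q \<ge> 1" and cop: "coprime p q"
    using cf_q_pos[OF \<alpha>] coprime_cf_p_q by (simp_all add: q_def p_def)
  have \<theta>: "0 < (-1) ^ (K - 1) * \<theta>"
    using cf_convergent_error(1)[OF \<alpha> K] by (simp add: q_def p_def \<theta>_def)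
  have \<theta>_neg: "\<theta> < 0 \<longleftrightarrow> odd (K - 1)" and "\<theta> \<noteq> 0"
    using \<theta> by (cases "even (K - 1)"; simp)+
  have \<alpha>_eq: "\<alpha> = (real p + \<theta>) / real q"
    using q by (simp add: \<theta>_def field_simps)
  have bq\<theta>: "real b * real q * \<bar>\<theta>\<bar> \<le> C" and small: "real L * real (b * q) * \<bar>\<theta>\<bar> < 1"
    using cf_convergent_error_multiple[OF \<alpha> K b CL] by (simp_all add: q_def p_def \<theta>_def)
  have "int L dvd int q + \<rho>"
    using qL by (simp add: \<rho>_def q_def mod_eq_dvd_iff)
  moreover have "0 \<le> int q + \<rho>"
    using q \<rho>\<^sub>0 by (auto simp: \<rho>_def minus_one_power_iff)
  ultimately obtain k where kL: "int (k * L) = int q + \<rho>"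
    by (rule nonneg_int_dvd_imp_nat_mult)
  have "of_int \<rho> * \<theta> = of_int \<rho>\<^sub>0 * ((-1) ^ (K - 1) * \<theta>)"
    by (simp add: \<rho>_def)
  then have \<rho>: "\<bar>\<rho>\<bar> \<le> 1" "0 \<le> of_int \<rho> * \<theta>"
    using \<rho>\<^sub>0 \<theta> by (auto simp: \<rho>_def abs_mult power_abs)
  have "S_sum (b * q) (sawtooth_step s \<nu> c x) \<alpha>
      = real b * (s * (real (of_bool (\<theta> < 0)) - 1/2) + of_int \<rho> * M)
        + s * (\<Sum>n=1..b * q. real n * \<theta>) / real q"
    unfolding \<alpha>_eq M_def by (rule S_sum_sawtooth_step_near_rational[where \<sigma> = \<sigma> and x = x and \<nu> = \<nu> and L = L,
        OF q cop \<open>\<theta> \<noteq> 0\<close> small kL \<rho> grid mono])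
  also have "s * (real (of_bool (\<theta> < 0)) - 1/2) + of_int \<rho> * M = (-1) ^ (K - 1) * (of_int \<rho>\<^sub>0 * M - s / 2)"
    using \<theta>_neg by (cases "even (K - 1)") (auto simp: \<rho>_def algebra_simps)
  finally have S: "S_sum (b * q) (sawtooth_step s \<nu> c x) \<alpha> - (-1) ^ (K - 1) * real b * (of_int \<rho>\<^sub>0 * M - s / 2)
      = s * (\<Sum>n=1..b * q. real n * \<theta>) / real q"
    by (simp add: algebra_simps)
  have "\<bar>\<Sum>n=1..b * q. real n * \<theta>\<bar> / real q \<le> real b * (real b * real q * \<bar>\<theta>\<bar>)"
    using abs_sum_of_nat_mult_le[where N = "b * q" and \<theta> = \<theta>] q by (simp add: divide_le_eq algebra_simps)
  also have "\<dots> \<le> real b * C"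
    using bq\<theta> by (intro mult_left_mono) auto
  finally have "\<bar>s\<bar> * (\<bar>\<Sum>n=1..b * q. real n * \<theta>\<bar> / real q) \<le> \<bar>s\<bar> * (real b * C)"
    by (rule mult_left_mono) simp
  then show ?thesis
    unfolding q_def[symmetric] M_def[symmetric] S by (simp add: abs_mult ac_simps)
qed

section \<open>Oscillation along convergents\<close>

text \<open>The residue class \<open>q\<^sub>K\<^sub>-\<^sub>1 \<equiv> -(-1)\<^sup>K\<^sup>-\<^sup>1 \<rho>\<^sub>0 (mod L)\<close> with \<open>\<rho>\<^sub>0 = [s = 0]\<close> makes
  the drift \<open>E = \<rho>\<^sub>0 \<Sum>c\<^sub>i (x\<^sub>i - x\<^sub>i\<^sub>-\<^sub>1) - s/2\<close> nonzero.\<close>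
lemma S_sum_sawtooth_step_alternates:
  fixes s :: real and L \<nu> :: nat and \<sigma> :: "nat \<Rightarrow> nat" and c x :: "nat \<Rightarrow> real"
  assumes grid: "\<And>i. i \<le> \<nu> \<Longrightarrow> \<sigma> i < L \<and> x i = real (\<sigma> i) / real L"
    and mono: "\<And>i. i \<in> {1..\<nu>} \<Longrightarrow> \<sigma> (i - 1) \<le> \<sigma> i"
    and nondeg: "s \<noteq> 0 \<or> (\<Sum>i=1..\<nu>. c i * (x i - x (i - 1))) \<noteq> 0"
  obtains C E :: real and \<rho>\<^sub>0 :: int where "C > 0" "E \<noteq> 0"
    and "\<And>\<alpha> K b. 0 < \<alpha> \<Longrightarrow> \<alpha> < 1 \<Longrightarrow> \<alpha> \<notin> \<rat> \<Longrightarrow> K \<ge> 1 \<Longrightarrow> real b \<le> C * real (cf_a \<alpha> K) \<Longrightarrow>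
      int (cf_q \<alpha> (K - 1)) mod int L = (- ((-1) ^ (K - 1) * \<rho>\<^sub>0)) mod int L \<Longrightarrow>
      \<bar>S_sum (b * cf_q \<alpha> (K - 1)) (sawtooth_step s \<nu> c x) \<alpha> - (-1) ^ (K - 1) * real b * E\<bar>
        \<le> real b * (\<bar>E\<bar> / 2)"
proof -
  define \<rho>\<^sub>0 :: int where "\<rho>\<^sub>0 = of_bool (s = 0)"
  define E where "E = of_int \<rho>\<^sub>0 * (\<Sum>i=1..\<nu>. c i * (x i - x (i - 1))) - s / 2"
  define C where "C = min (1 / real L) (\<bar>E\<bar> / (2 * (\<bar>s\<bar> + 1)))"
  have L: "L \<ge> 1" using grid[of 0] by simp
  have E: "E \<noteq> 0" using nondeg by (auto simp: E_def \<rho>\<^sub>0_def)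
  have C: "C > 0" "C * real L \<le> 1" using L E by (auto simp: C_def min_def field_simps)
  have "\<bar>s\<bar> * C \<le> \<bar>s\<bar> * (\<bar>E\<bar> / (2 * (\<bar>s\<bar> + 1)))"
    by (intro mult_left_mono) (auto simp: C_def)
  also have "\<dots> \<le> (\<bar>s\<bar> + 1) * (\<bar>E\<bar> / (2 * (\<bar>s\<bar> + 1)))"
    by (intro mult_right_mono) auto
  also have "\<dots> = \<bar>E\<bar> / 2"
    by (simp add: field_simps add_pos_nonneg)
  finally have sC: "\<bar>s\<bar> * C \<le> \<bar>E\<bar> / 2" .
  show ?thesis
  proof (rule that[OF C(1) E])
    fix \<alpha> K b
    assume \<alpha>: "0 < \<alpha>" "\<alpha> < 1" "\<alpha> \<notin> \<rat>" and K: "K \<ge> 1" and b: "real b \<le> C * real (cf_a \<alpha> K)"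
      and qL: "int (cf_q \<alpha> (K - 1)) mod int L = (- ((-1) ^ (K - 1) * \<rho>\<^sub>0)) mod int L"
    have "\<bar>S_sum (b * cf_q \<alpha> (K - 1)) (sawtooth_step s \<nu> c x) \<alpha> - (-1) ^ (K - 1) * real b * E\<bar>
        \<le> real b * \<bar>s\<bar> * C"
      using S_sum_sawtooth_step_convergent[where \<sigma> = \<sigma> and x = x and \<nu> = \<nu> and L = L and s = s and c = c,
          OF \<alpha> K grid mono qL _ C(2) b]
      by (simp add: E_def \<rho>\<^sub>0_def)
    also have "\<dots> \<le> real b * (\<bar>E\<bar> / 2)"
      using sC by (simp add: mult.assoc mult_left_mono)
    finally show "\<bar>S_sum (b * cf_q \<alpha> (K - 1)) (sawtooth_step s \<nu> c x) \<alpha> - (-1) ^ (K - 1) * real b * E\<bar>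
        \<le> real b * (\<bar>E\<bar> / 2)" .
  qed
qed

lemma minus_one_power_diff_one:
  assumes "K \<ge> 1"
  shows "(-1) ^ (K - 1) = (if int K mod 2 = 1 then 1 else (-1::int))"
proof -
  have "even (K - 1) \<longleftrightarrow> int K mod 2 = 1" using assms by presburger
  then show ?thesis by (simp add: minus_one_power_iff)
qed

lemma S_sum_sawtooth_step_residue_classes:
  fixes s :: real and L \<nu> :: nat and \<sigma> :: "nat \<Rightarrow> nat" and c x :: "nat \<Rightarrow> real"
  assumes grid: "\<And>i. i \<le> \<nu> \<Longrightarrow> \<sigma> i < L \<and> x i = real (\<sigma> i) / real L"
    and mono: "\<And>i. i \<in> {1..\<nu>} \<Longrightarrow> \<sigma> (i - 1) \<le> \<sigma> i"
    and nondeg: "s \<noteq> 0 \<or> (\<Sum>i=1..\<nu>. c i * (x i - x (i - 1))) \<noteq> 0"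
  obtains C C' :: real and \<mu>\<^sub>1 \<gamma>\<^sub>1 \<mu>\<^sub>2 \<gamma>\<^sub>2 :: int where "C > 0" "C' > 0"
    and "\<And>\<alpha> K b. 0 < \<alpha> \<Longrightarrow> \<alpha> < 1 \<Longrightarrow> \<alpha> \<notin> \<rat> \<Longrightarrow> K \<ge> 1 \<Longrightarrow> real b \<le> C * real (cf_a \<alpha> K) \<Longrightarrow>
      int K mod 2 = \<mu>\<^sub>1 mod 2 \<Longrightarrow> int (cf_q \<alpha> (K - 1)) mod int L = \<gamma>\<^sub>1 mod int L \<Longrightarrow>
      S_sum (b * cf_q \<alpha> (K - 1)) (sawtooth_step s \<nu> c x) \<alpha> \<ge> real b * C'"
    and "\<And>\<alpha> K b. 0 < \<alpha> \<Longrightarrow> \<alpha> < 1 \<Longrightarrow> \<alpha> \<notin> \<rat> \<Longrightarrow> K \<ge> 1 \<Longrightarrow> real b \<le> C * real (cf_a \<alpha> K) \<Longrightarrow>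
      int K mod 2 = \<mu>\<^sub>2 mod 2 \<Longrightarrow> int (cf_q \<alpha> (K - 1)) mod int L = \<gamma>\<^sub>2 mod int L \<Longrightarrow>
      S_sum (b * cf_q \<alpha> (K - 1)) (sawtooth_step s \<nu> c x) \<alpha> \<le> - (real b * C')"
proof -
  obtain C E \<rho>\<^sub>0 where C: "C > 0" and E: "E \<noteq> 0"
    and approx: "\<And>\<alpha> K b. 0 < \<alpha> \<Longrightarrow> \<alpha> < 1 \<Longrightarrow> \<alpha> \<notin> \<rat> \<Longrightarrow> K \<ge> 1 \<Longrightarrow> real b \<le> C * real (cf_a \<alpha> K) \<Longrightarrow>
      int (cf_q \<alpha> (K - 1)) mod int L = (- ((-1) ^ (K - 1) * \<rho>\<^sub>0)) mod int L \<Longrightarrow>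
      \<bar>S_sum (b * cf_q \<alpha> (K - 1)) (sawtooth_step s \<nu> c x) \<alpha> - (-1) ^ (K - 1) * real b * E\<bar>
        \<le> real b * (\<bar>E\<bar> / 2)"
    using S_sum_sawtooth_step_alternates[where \<sigma> = \<sigma> and x = x and \<nu> = \<nu> and L = L and c = c,
        OF grid mono nondeg] by blast
  define \<epsilon> :: int where "\<epsilon> = (if E > 0 then 1 else -1)"
  have \<epsilon>: "of_int \<epsilon> * E = \<bar>E\<bar>" using E by (simp add: \<epsilon>_def)
  have drift: "\<bar>S_sum (b * cf_q \<alpha> (K - 1)) (sawtooth_step s \<nu> c x) \<alpha> - real b * (of_int \<eta> * E)\<bar>
      \<le> real b * (\<bar>E\<bar> / 2)"
    if "0 < \<alpha>" "\<alpha> < 1" "\<alpha> \<notin> \<rat>" "K \<ge> 1" "real b \<le> C * real (cf_a \<alpha> K)"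
      and \<eta>: "(-1) ^ (K - 1) = \<eta>"
      and "int (cf_q \<alpha> (K - 1)) mod int L = (- (\<eta> * \<rho>\<^sub>0)) mod int L" for \<alpha> K b \<eta>
  proof -
    have "(-1::real) ^ (K - 1) = of_int \<eta>"
      using arg_cong[OF \<eta>, of real_of_int] by simp
    then show ?thesis
      using approx[of \<alpha> K b] that by (simp add: ac_simps)
  qed
  show ?thesis
  proof (rule that[of C "\<bar>E\<bar> / 2" "of_bool (E > 0)" "- \<epsilon> * \<rho>\<^sub>0" "of_bool (E < 0)" "\<epsilon> * \<rho>\<^sub>0"])
    show "C > 0" "\<bar>E\<bar> / 2 > 0" using C E by simp_all
  next
    fix \<alpha> K b
    assume \<alpha>: "0 < \<alpha>" "\<alpha> < 1" "\<alpha> \<notin> \<rat>" and K: "K \<ge> 1" and b: "real b \<le> C * real (cf_a \<alpha> K)"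
    {
      assume "int K mod 2 = of_bool (E > 0) mod 2"
        and "int (cf_q \<alpha> (K - 1)) mod int L = (- \<epsilon> * \<rho>\<^sub>0) mod int L"
      moreover have "(-1) ^ (K - 1) = \<epsilon>"
        using calculation(1) minus_one_power_diff_one[OF K] by (simp add: \<epsilon>_def split: if_splits)
      ultimately have "\<bar>S_sum (b * cf_q \<alpha> (K - 1)) (sawtooth_step s \<nu> c x) \<alpha> - real b * \<bar>E\<bar>\<bar> \<le> real b * (\<bar>E\<bar> / 2)"
        using drift[OF \<alpha> K b, of \<epsilon>] \<epsilon> by simp
      then show "S_sum (b * cf_q \<alpha> (K - 1)) (sawtooth_step s \<nu> c x) \<alpha> \<ge> real b * (\<bar>E\<bar> / 2)"
        by (simp only: abs_le_iff) linarith
    next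
      assume "int K mod 2 = of_bool (E < 0) mod 2"
        and "int (cf_q \<alpha> (K - 1)) mod int L = (\<epsilon> * \<rho>\<^sub>0) mod int L"
      moreover have "(-1) ^ (K - 1) = - \<epsilon>"
        using calculation(1) minus_one_power_diff_one[OF K] E by (auto simp: \<epsilon>_def split: if_splits)
      ultimately have "\<bar>S_sum (b * cf_q \<alpha> (K - 1)) (sawtooth_step s \<nu> c x) \<alpha> + real b * \<bar>E\<bar>\<bar> \<le> real b * (\<bar>E\<bar> / 2)"
        using drift[OF \<alpha> K b, of "- \<epsilon>"] \<epsilon> by simp
      then show "S_sum (b * cf_q \<alpha> (K - 1)) (sawtooth_step s \<nu> c x) \<alpha> \<le> - (real b * (\<bar>E\<bar> / 2))"
        by (simp only: abs_le_iff) linarith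
    }
  qed
qed

lemma Rats_common_denominator:
  fixes x :: "'a \<Rightarrow> real"
  assumes "finite I" "\<And>i. i \<in> I \<Longrightarrow> x i \<in> \<rat>"
  obtains L :: nat where "L \<ge> 1" "\<And>i. i \<in> I \<Longrightarrow> real L * x i \<in> \<int>"
  using assms
proof (induction I arbitrary: thesis rule: finite_induct)
  case empty
  then show ?case by auto
next
  case (insert j I)
  then obtain L :: nat where L: "L \<ge> 1" "\<And>i. i \<in> I \<Longrightarrow> real L * x i \<in> \<int>" by auto
  have "x j \<in> \<rat>" using insert.prems(2) by simp
  then obtain a b :: int where ab: "b > 0" "x j = of_int a / of_int b"
    by (rule Rats_cases')
  have "real (L * nat b) * x i \<in> \<int>" if "i \<in> insert j I" for i
  proof (cases "i = j")
    case True
    then show ?thesis using ab by (simp add: mult.assoc)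
  next
    case False
    then have "of_int b * (real L * x i) \<in> \<int>" using that L(2) by (simp add: Ints_mult)
    then show ?thesis using ab by (simp add: ac_simps)
  qed
  then show ?case using insert.prems(1)[of "L * nat b"] L(1) ab(1) by (simp add: Suc_le_eq)
qed

lemma pw_smooth_rat_disc_grid:
  assumes hf: "pw_smooth_rat_disc f \<nu> x" and x0: "x 0 = 0"
  obtains \<sigma> :: "nat \<Rightarrow> nat" and L :: nat
  where "\<And>i. i \<le> \<nu> \<Longrightarrow> \<sigma> i < L \<and> x i = real (\<sigma> i) / real L"
    and "\<And>i. i \<in> {1..\<nu>} \<Longrightarrow> \<sigma> (i - 1) \<le> \<sigma> i"
proof -
  have rat: "\<forall>i\<in>{1..\<nu>}. x i \<in> \<rat>" and x1: "0 \<le> x 1" and x\<nu>: "x \<nu> < 1"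
    and inc: "\<forall>i\<in>{1..<\<nu>}. x i < x (Suc i)"
    using hf unfolding pw_smooth_rat_disc_def by auto
  have step: "x (i - 1) \<le> x i" if "i \<in> {1..\<nu>}" for i
  proof (cases "i = 1")
    case True
    then show ?thesis using x0 x1 by simp
  next
    case False
    then have "i - 1 \<in> {1..<\<nu>}" using that by auto
    then have "x (i - 1) < x (Suc (i - 1))" using inc by blast
    then show ?thesis using that by simp
  qed
  define y where "y i = x (min i \<nu>)" for i
  have "y n \<le> y (Suc n)" for n
    using step[of "Suc n"] by (cases "n < \<nu>") (auto simp: y_def min_def)
  then have y_mono: "y i \<le> y j" if "i \<le> j" for i j
    using lift_Suc_mono_le that by blast
  have x_range: "0 \<le> x i \<and> x i < 1" if "i \<le> \<nu>" for i
    using y_mono[of 0 i] y_mono[of i \<nu>] that x0 x\<nu> by (simp add: y_def min_def)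
  have "x i \<in> \<rat>" if "i \<in> {..\<nu>}" for i
    using that rat x0 by (cases "i = 0") auto
  then obtain L :: nat where L: "L \<ge> 1" "\<And>i. i \<in> {..\<nu>} \<Longrightarrow> real L * x i \<in> \<int>"
    using Rats_common_denominator[of "{..\<nu>}" x] by blast
  define \<sigma> where "\<sigma> i = nat \<lfloor>real L * x i\<rfloor>" for i
  have \<sigma>: "\<sigma> i < L \<and> x i = real (\<sigma> i) / real L" if "i \<le> \<nu>" for i
  proof -
    have "real L * x i \<in> \<int>" using L(2) that by simp
    then obtain z where z: "real L * x i = of_int z" by (auto elim: Ints_cases)
    have "0 \<le> real L * x i" "real L * x i < real L"
      using x_range[OF that] L(1) by simp_all
    moreover have \<sigma>_eq: "real (\<sigma> i) = real L * x i"
      using z calculation(1) by (simp add: \<sigma>_def)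
    ultimately have "real (\<sigma> i) < real L" by linarith
    then have "\<sigma> i < L" by (simp only: of_nat_less_iff)
    then show ?thesis
      using \<sigma>_eq L(1) by (simp add: field_simps)
  qed
  moreover have "\<sigma> (i - 1) \<le> \<sigma> i" if "i \<in> {1..\<nu>}" for i
  proof -
    have "real (\<sigma> (i - 1)) / real L \<le> real (\<sigma> i) / real L"
      using step[OF that] \<sigma>[of i] \<sigma>[of "i - 1"] that by auto
    then show ?thesis using L(1) by (simp add: divide_le_cancel)
  qed
  ultimately show ?thesis using that by blast
qed

lemma S_sum_sawtooth_step_oscillates:
  fixes s :: real and L \<nu> :: nat and \<sigma> :: "nat \<Rightarrow> nat" and c x :: "nat \<Rightarrow> real"
  assumes grid: "\<And>i. i \<le> \<nu> \<Longrightarrow> \<sigma> i < L \<and> x i = real (\<sigma> i) / real L"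
    and mono: "\<And>i. i \<in> {1..\<nu>} \<Longrightarrow> \<sigma> (i - 1) \<le> \<sigma> i"
    and nondeg: "s \<noteq> 0 \<or> (\<Sum>i=1..\<nu>. c i * (x i - x (i - 1))) \<noteq> 0"
  shows "\<exists>C C' D :: real. C > 0 \<and> C' > 0 \<and> D > 0 \<and>
    (\<exists>\<mu>1 \<beta>1 \<gamma>1 \<delta>1 \<mu>2 \<beta>2 \<gamma>2 \<delta>2 :: int. \<beta>1 > 0 \<and> \<delta>1 > 0 \<and> \<beta>2 > 0 \<and> \<delta>2 > 0 \<and>
      (\<forall>\<alpha>::real. 0 < \<alpha> \<and> \<alpha> < 1 \<and> \<alpha> \<notin> \<rat> \<longrightarrow>
        (\<exists>K0 N0 :: nat. \<forall>K \<ge> K0. cf_a \<alpha> K \<ge> N0 \<longrightarrow>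
          ((int K mod \<beta>1 = \<mu>1 mod \<beta>1 \<and> int (cf_q \<alpha> (K - 1)) mod \<delta>1 = \<gamma>1 mod \<delta>1 \<longrightarrow>
             (\<forall>b::nat. real b \<le> C * real (cf_a \<alpha> K) \<longrightarrow>
                S_sum (b * cf_q \<alpha> (K - 1)) (sawtooth_step s \<nu> c x) \<alpha>
                  \<ge> real b * C' - D * (\<Sum>i=1..K - 1. real (cf_a \<alpha> i)))) \<and>
           (int K mod \<beta>2 = \<mu>2 mod \<beta>2 \<and> int (cf_q \<alpha> (K - 1)) mod \<delta>2 = \<gamma>2 mod \<delta>2 \<longrightarrow>
             (\<forall>b::nat. real b \<le> C * real (cf_a \<alpha> K) \<longrightarrow>
                S_sum (b * cf_q \<alpha> (K - 1)) (sawtooth_step s \<nu> c x) \<alpha>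
                  \<le> - (real b * C') + D * (\<Sum>i=1..K - 1. real (cf_a \<alpha> i))))))))"
proof -
  let ?S = "\<lambda>b \<alpha> K. S_sum (b * cf_q \<alpha> (K - 1)) (sawtooth_step s \<nu> c x) \<alpha>"
  obtain C C' \<mu>\<^sub>1 \<gamma>\<^sub>1 \<mu>\<^sub>2 \<gamma>\<^sub>2 where C: "C > 0" "C' > 0"
    and lower: "\<And>\<alpha> K b. 0 < \<alpha> \<Longrightarrow> \<alpha> < 1 \<Longrightarrow> \<alpha> \<notin> \<rat> \<Longrightarrow> K \<ge> 1 \<Longrightarrow> real b \<le> C * real (cf_a \<alpha> K) \<Longrightarrow>
      int K mod 2 = \<mu>\<^sub>1 mod 2 \<Longrightarrow> int (cf_q \<alpha> (K - 1)) mod int L = \<gamma>\<^sub>1 mod int L \<Longrightarrow> ?S b \<alpha> K \<ge> real b * C'"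
    and upper: "\<And>\<alpha> K b. 0 < \<alpha> \<Longrightarrow> \<alpha> < 1 \<Longrightarrow> \<alpha> \<notin> \<rat> \<Longrightarrow> K \<ge> 1 \<Longrightarrow> real b \<le> C * real (cf_a \<alpha> K) \<Longrightarrow>
      int K mod 2 = \<mu>\<^sub>2 mod 2 \<Longrightarrow> int (cf_q \<alpha> (K - 1)) mod int L = \<gamma>\<^sub>2 mod int L \<Longrightarrow> ?S b \<alpha> K \<le> - (real b * C')"
    using S_sum_sawtooth_step_residue_classes[where \<sigma> = \<sigma> and x = x and \<nu> = \<nu> and L = L and c = c,
        OF grid mono nondeg] by blast
  have sum_a: "0 \<le> (\<Sum>i=1..K - 1. real (cf_a \<alpha> i))" for \<alpha> K
    by (simp add: sum_nonneg)
  have bounds: "\<forall>\<alpha>::real. 0 < \<alpha> \<and> \<alpha> < 1 \<and> \<alpha> \<notin> \<rat> \<longrightarrow> (\<forall>K \<ge> 1. cf_a \<alpha> K \<ge> 0 \<longrightarrow>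
      ((int K mod 2 = \<mu>\<^sub>1 mod 2 \<and> int (cf_q \<alpha> (K - 1)) mod int L = \<gamma>\<^sub>1 mod int L \<longrightarrow>
         (\<forall>b::nat. real b \<le> C * real (cf_a \<alpha> K) \<longrightarrow>
            ?S b \<alpha> K \<ge> real b * C' - 1 * (\<Sum>i=1..K - 1. real (cf_a \<alpha> i)))) \<and>
       (int K mod 2 = \<mu>\<^sub>2 mod 2 \<and> int (cf_q \<alpha> (K - 1)) mod int L = \<gamma>\<^sub>2 mod int L \<longrightarrow>
         (\<forall>b::nat. real b \<le> C * real (cf_a \<alpha> K) \<longrightarrow>
            ?S b \<alpha> K \<le> - (real b * C') + 1 * (\<Sum>i=1..K - 1. real (cf_a \<alpha> i))))))"
  proof (intro allI impI conjI)
    fix \<alpha> K b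
    assume "0 < \<alpha> \<and> \<alpha> < 1 \<and> \<alpha> \<notin> \<rat>" "1 \<le> K" "0 \<le> cf_a \<alpha> K"
      "int K mod 2 = \<mu>\<^sub>1 mod 2 \<and> int (cf_q \<alpha> (K - 1)) mod int L = \<gamma>\<^sub>1 mod int L"
      "real b \<le> C * real (cf_a \<alpha> K)"
    then have "?S b \<alpha> K \<ge> real b * C'"
      using lower by blast
    then show "?S b \<alpha> K \<ge> real b * C' - 1 * (\<Sum>i=1..K - 1. real (cf_a \<alpha> i))"
      using sum_a[of \<alpha> K] by linarith
  next
    fix \<alpha> K b
    assume "0 < \<alpha> \<and> \<alpha> < 1 \<and> \<alpha> \<notin> \<rat>" "1 \<le> K" "0 \<le> cf_a \<alpha> K"
      "int K mod 2 = \<mu>\<^sub>2 mod 2 \<and> int (cf_q \<alpha> (K - 1)) mod int L = \<gamma>\<^sub>2 mod int L"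
      "real b \<le> C * real (cf_a \<alpha> K)"
    then have "?S b \<alpha> K \<le> - (real b * C')"
      using upper by blast
    then show "?S b \<alpha> K \<le> - (real b * C') + 1 * (\<Sum>i=1..K - 1. real (cf_a \<alpha> i))"
      using sum_a[of \<alpha> K] by linarith
  qed
  have pos: "int L > 0" "(2::int) > 0" "(1::real) > 0"
    using grid[of 0] by simp_all
  show ?thesis
    by (rule exI[of _ C], rule exI[of _ C'], rule exI[of _ 1]) (use C bounds pos in blast)
qed

theorem lemma3p8:
  fixes f :: "real \<Rightarrow> real" and \<nu> :: nat and x :: "nat \<Rightarrow> real"
    and A c :: "nat \<Rightarrow> real" and g :: "real \<Rightarrow> real"
  assumes hf: "pw_smooth_rat_disc f \<nu> x"
    and hx0: "x 0 = 0"
    and hA: "\<And>i. A i = jump f (x i)"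
    and hc: "\<And>i. c i = (\<Sum>j=1..i. A j)"
    and hg: "\<And>y. g y = (frac y - 1/2) * (\<Sum>i=1..\<nu>. A i)
              + (\<Sum>i=1..\<nu>. c i * (indicator {x (i - 1)..<x i} (frac y) - (x i - x (i - 1))))"
    and hnd: "(\<Sum>i=1..\<nu>. A i) \<noteq> 0 \<or> (\<Sum>i=1..\<nu>. c i * (x i - x (i - 1))) \<noteq> 0"
  shows "\<exists>C C' D :: real. C > 0 \<and> C' > 0 \<and> D > 0 \<and>
    (\<exists>\<mu>1 \<beta>1 \<gamma>1 \<delta>1 \<mu>2 \<beta>2 \<gamma>2 \<delta>2 :: int. \<beta>1 > 0 \<and> \<delta>1 > 0 \<and> \<beta>2 > 0 \<and> \<delta>2 > 0 \<and>
      (\<forall>\<alpha>::real. 0 < \<alpha> \<and> \<alpha> < 1 \<and> \<alpha> \<notin> \<rat> \<longrightarrow>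
        (\<exists>K0 N0 :: nat. \<forall>K \<ge> K0. cf_a \<alpha> K \<ge> N0 \<longrightarrow>
          ((int K mod \<beta>1 = \<mu>1 mod \<beta>1 \<and> int (cf_q \<alpha> (K - 1)) mod \<delta>1 = \<gamma>1 mod \<delta>1 \<longrightarrow>
             (\<forall>b::nat. real b \<le> C * real (cf_a \<alpha> K) \<longrightarrow>
                S_sum (b * cf_q \<alpha> (K - 1)) g \<alpha>
                  \<ge> real b * C' - D * (\<Sum>i=1..K - 1. real (cf_a \<alpha> i)))) \<and>
           (int K mod \<beta>2 = \<mu>2 mod \<beta>2 \<and> int (cf_q \<alpha> (K - 1)) mod \<delta>2 = \<gamma>2 mod \<delta>2 \<longrightarrow>
             (\<forall>b::nat. real b \<le> C * real (cf_a \<alpha> K) \<longrightarrow>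
                S_sum (b * cf_q \<alpha> (K - 1)) g \<alpha>
                  \<le> - (real b * C') + D * (\<Sum>i=1..K - 1. real (cf_a \<alpha> i))))))))"
proof -
  obtain \<sigma> L where grid: "\<And>i. i \<le> \<nu> \<Longrightarrow> \<sigma> i < L \<and> x i = real (\<sigma> i) / real L"
    and mono: "\<And>i. i \<in> {1..\<nu>} \<Longrightarrow> \<sigma> (i - 1) \<le> \<sigma> i"
    by (rule pw_smooth_rat_disc_grid[OF hf hx0]) (rule that)
  have "g = sawtooth_step (\<Sum>i=1..\<nu>. A i) \<nu> c x"
    using hg by (simp add: fun_eq_iff sawtooth_step_def)
  then show ?thesis
    using S_sum_sawtooth_step_oscillates[where \<sigma> = \<sigma> and x = x and \<nu> = \<nu> and L = L, OF grid mono hnd]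
    by simp
qed

end
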